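(* The topological Markov shift $(\Omega,\sigma)$ is topologically mixing and has the BIP property.
   Context: For $n\ge1$ let $\mathcal A_n=\{(\mathbf1,k)_n:1\le k\le n+1\}\cup\{(\mathbf2,1)_n\}\cup\{(\mathbf3,k)_n:1\le k\le n\}$; for $e=(\mathbf t,k)_n$ its type is $\mathbf t_e=\mathbf t$. For $\mathbf t\in\{\mathbf1,\mathbf2,\mathbf3\}$ and $\hat e\in\mathcal A_n$, $\mathbf t\to\hat e$ iff $(\mathbf t,\hat e)$ is $(\mathbf1,(\mathbf2,1)_n)$, $(\mathbf2,(\mathbf1,k)_n)$ with $k\le n+1$, $(\mathbf2,(\mathbf3,k)_n)$ with $k\le n$, $(\mathbf3,(\mathbf1,k)_n)$ with $k\le n$, or $(\mathbf3,(\mathbf3,k)_n)$ with $k\le n-1$; for $e,\hat e$ in the alphabets, $e\to\hat e$ iff $\mathbf t_e\to\hat e$. $\mathcal A=\bigsqcup_{n\ge1}\mathcal A_n$ (countable alphabet); $\Omega=\{x_1x_2\cdots\in\mathcal A^{\mathbb N}:x_j\to x_{j+1}\ \forall j\}$ with metric $2^{-|x\wedge y|}$ and left shift $\sigma$. Topologically mixing: for all $e,\hat e\in\mathcal A$ there is $N$ such that for all $n\ge N$ there is an admissible word of length $n$ from $e$ to $\hat e$. BIP: there is a finite $\mathcal S\subset\mathcal A$ such that for every $e\in\mathcal A$ there are $s_1,s_2\in\mathcal S$ with $s_1\to e\to s_2$. *)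

theory Defs
  imports Main
begin

datatype ty = T1 | T2 | T3

text \<open>A letter (t,k,n) stands for (t,k)_n.\<close>
type_synonym letter = "ty \<times> nat \<times> nat"

definition alph_n :: "nat \<Rightarrow> letter set" where
  "alph_n n = {(T1,k,n) | k. 1 \<le> k \<and> k \<le> n + 1} \<union> {(T2,1,n)}
              \<union> {(T3,k,n) | k. 1 \<le> k \<and> k \<le> n}"

definition alph :: "letter set" where
  "alph = (\<Union>n\<in>{1..}. alph_n n)"

definition tyof :: "letter \<Rightarrow> ty" where
  "tyof e = fst e"

definition ty_to :: "ty \<Rightarrow> letter \<Rightarrow> bool" where
  "ty_to t f \<longleftrightarrow> f \<in> alph \<and>
     (case f of (u, k, n) \<Rightarrow>
        (t = T1 \<and> u = T2 \<and> k = 1)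
      \<or> (t = T2 \<and> u = T1 \<and> k \<le> n + 1)
      \<or> (t = T2 \<and> u = T3 \<and> k \<le> n)
      \<or> (t = T3 \<and> u = T1 \<and> k \<le> n)
      \<or> (t = T3 \<and> u = T3 \<and> k \<le> n - 1))"

definition arrow :: "letter \<Rightarrow> letter \<Rightarrow> bool" where
  "arrow e f \<longleftrightarrow> e \<in> alph \<and> f \<in> alph \<and> ty_to (tyof e) f"

definition Omega :: "(nat \<Rightarrow> letter) set" where
  "Omega = {x. (\<forall>j. x j \<in> alph) \<and> (\<forall>j. arrow (x j) (x (Suc j)))}"

definition shift :: "(nat \<Rightarrow> letter) \<Rightarrow> (nat \<Rightarrow> letter)" where
  "shift x = (\<lambda>j. x (Suc j))"

definition adm_word :: "('a \<Rightarrow> 'a \<Rightarrow> bool) \<Rightarrow> 'a set \<Rightarrow> nat \<Rightarrow> 'a \<Rightarrow> 'a \<Rightarrow> 'a list \<Rightarrow> bool" where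
  "adm_word T A n e f w \<longleftrightarrow> length w = n \<and> n \<ge> 1 \<and> set w \<subseteq> A \<and>
     w ! 0 = e \<and> w ! (n - 1) = f \<and> (\<forall>j. j + 1 < n \<longrightarrow> T (w ! j) (w ! (j + 1)))"

definition topologically_mixing :: "('a \<Rightarrow> 'a \<Rightarrow> bool) \<Rightarrow> 'a set \<Rightarrow> bool" where
  "topologically_mixing T A \<longleftrightarrow>
     (\<forall>e\<in>A. \<forall>f\<in>A. \<exists>N. \<forall>n\<ge>N. \<exists>w. adm_word T A n e f w)"

definition BIP :: "('a \<Rightarrow> 'a \<Rightarrow> bool) \<Rightarrow> 'a set \<Rightarrow> bool" where
  "BIP T A \<longleftrightarrow> (\<exists>S. finite S \<and> S \<subseteq> A \<and>
     (\<forall>e\<in>A. \<exists>s1\<in>S. \<exists>s2\<in>S. T s1 e \<and> T e s2))"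

end

theory Submission
  imports Defs
begin

text \<open>Every letter leads in one step to (1,1)_1 or (2,1)_1, and is entered in one step
  from one of them; this is BIP with \<open>S = {(1,1)_1, (2,1)_1}\<close>. The two letters are joined
  to each other through (3,1)_2, which carries a self-loop. So every letter reaches this
  looping letter and is reached from it, and padding with the loop gives admissible words
  of every sufficiently large length.\<close>

lemma adm_word_iff_successively:
  "adm_word T A n e f w \<longleftrightarrow>
     w \<noteq> [] \<and> length w = n \<and> set w \<subseteq> A \<and> hd w = e \<and> last w = f \<and> successively T w"
  by (cases w) (auto simp: adm_word_def successively_conv_nth hd_conv_nth last_conv_nth)

lemma adm_word_append:
  assumes "adm_word T A m e c u" and "adm_word T A n c f v"
  shows "adm_word T A (m + n - 1) e f (u @ tl v)"
proof -
  obtain v' where v: "v = c # v'"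
    using assms(2) by (cases v) (auto simp: adm_word_iff_successively)
  show ?thesis
    using assms unfolding adm_word_iff_successively v
    by (auto simp: successively_append_iff successively_Cons last_append)
qed

lemma adm_word_replicate:
  assumes "c \<in> A" and "T c c"
  shows "adm_word T A (Suc k) c c (replicate (Suc k) c)"
  using assms by (induction k) (auto simp: adm_word_iff_successively successively_Cons)

lemma topologically_mixing_through_loop:
  assumes loop: "c \<in> A" "T c c"
    and to_loop: "\<And>e. e \<in> A \<Longrightarrow> \<exists>p u. adm_word T A p e c u"
    and from_loop: "\<And>f. f \<in> A \<Longrightarrow> \<exists>q v. adm_word T A q c f v"
  shows "topologically_mixing T A"
  unfolding topologically_mixing_def
proof (intro ballI)
  fix e f assume "e \<in> A" "f \<in> A"
  then obtain p q u v where u: "adm_word T A p e c u" and v: "adm_word T A q c f v"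
    using to_loop from_loop by blast
  have "p \<ge> 1" "q \<ge> 1"
    using u v by (simp_all add: adm_word_def)
  have "adm_word T A n e f (u @ replicate (Suc n - p - q) c @ tl v)" if "n \<ge> p + q" for n
  proof -
    have "adm_word T A (p + Suc (Suc n - p - q) - 1) e c (u @ replicate (Suc n - p - q) c)"
      using adm_word_append[OF u adm_word_replicate[of c A T, OF loop]] by simp
    from adm_word_append[OF this v] show ?thesis
      using that \<open>p \<ge> 1\<close> \<open>q \<ge> 1\<close> by (simp add: Suc_diff_le)
  qed
  then show "\<exists>N. \<forall>n\<ge>N. \<exists>w. adm_word T A n e f w"
    by blast
qed

abbreviation "a1 \<equiv> (T1, 1::nat, 1::nat)"
abbreviation "b1 \<equiv> (T2, 1::nat, 1::nat)"
abbreviation "c2 \<equiv> (T3, 1::nat, 2::nat)"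

lemma alph_cases [consumes 1, case_names T1 T2 T3]:
  assumes "e \<in> alph"
  obtains n k where "n \<ge> 1" "e = (T1, k, n)" "1 \<le> k" "k \<le> n + 1"
  | n where "n \<ge> 1" "e = (T2, 1, n)"
  | n k where "n \<ge> 1" "e = (T3, k, n)" "1 \<le> k" "k \<le> n"
  using assms unfolding alph_def alph_n_def by auto

lemma hub_letters_in_alph: "a1 \<in> alph" "b1 \<in> alph" "c2 \<in> alph"
  unfolding alph_def alph_n_def by force+

lemma hub_arrows: "arrow a1 b1" "arrow b1 a1" "arrow b1 c2" "arrow c2 c2" "arrow c2 a1"
  using hub_letters_in_alph by (auto simp: arrow_def ty_to_def tyof_def)

lemma arrow_into_hub:
  assumes "e \<in> alph"
  shows "if tyof e = T1 then arrow e b1 else arrow e a1"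
  using assms
  by (cases rule: alph_cases) (use assms hub_letters_in_alph in \<open>auto simp: arrow_def ty_to_def tyof_def\<close>)

lemma arrow_out_of_hub:
  assumes "f \<in> alph"
  shows "if tyof f = T2 then arrow a1 f else arrow b1 f"
  using assms
  by (cases rule: alph_cases) (use assms hub_letters_in_alph in \<open>auto simp: arrow_def ty_to_def tyof_def\<close>)

lemma BIP_arrow_alph: "BIP arrow alph"
  unfolding BIP_def
proof (intro exI[of _ "{a1, b1}"] conjI ballI)
  fix e assume "e \<in> alph"
  then show "\<exists>s1\<in>{a1, b1}. \<exists>s2\<in>{a1, b1}. arrow s1 e \<and> arrow e s2"
    using arrow_into_hub arrow_out_of_hub by (metis insertCI)
qed (use hub_letters_in_alph in auto)

lemma adm_word_to_loop:
  assumes "e \<in> alph"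
  shows "\<exists>p u. adm_word arrow alph p e c2 u"
proof (cases "tyof e = T1")
  case True
  then have "adm_word arrow alph 3 e c2 [e, b1, c2]"
    using assms arrow_into_hub[OF assms] hub_arrows hub_letters_in_alph
    by (simp add: adm_word_iff_successively)
  then show ?thesis by blast
next
  case False
  then have "adm_word arrow alph 4 e c2 [e, a1, b1, c2]"
    using assms arrow_into_hub[OF assms] hub_arrows hub_letters_in_alph
    by (simp add: adm_word_iff_successively)
  then show ?thesis by blast
qed

lemma adm_word_from_loop:
  assumes "f \<in> alph"
  shows "\<exists>q v. adm_word arrow alph q c2 f v"
proof (cases "tyof f = T2")
  case True
  then have "adm_word arrow alph 3 c2 f [c2, a1, f]"
    using assms arrow_out_of_hub[OF assms] hub_arrows hub_letters_in_alph
    by (simp add: adm_word_iff_successively)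
  then show ?thesis by blast
next
  case False
  then have "adm_word arrow alph 4 c2 f [c2, a1, b1, f]"
    using assms arrow_out_of_hub[OF assms] hub_arrows hub_letters_in_alph
    by (simp add: adm_word_iff_successively)
  then show ?thesis by blast
qed

theorem proposition4p1:
  shows "topologically_mixing arrow alph \<and> BIP arrow alph"
proof
  show "topologically_mixing arrow alph"
    using hub_letters_in_alph(3) hub_arrows(4) adm_word_to_loop adm_word_from_loop
    by (rule topologically_mixing_through_loop)
  show "BIP arrow alph"
    by (rule BIP_arrow_alph)
qed

end
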